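(* Assume $\mathrm{recc}(C)\subseteq\mathrm{recc}(P^B)$. Let $D\subseteq N_1\cup N_2$, let $(i,j)\in M_D\times(N\setminus D)$, and let $\gamma\in[0,\gamma_{ij})$. Then $\alpha_i\bar r^i+\gamma\bar r^j\in\mathrm{recc}(G_D^C)$.
   Context: Let $A\in\mathbb{R}^{m\times n}$ have full row rank, $b\in\mathbb{R}^m$, and $P=\{x\in\mathbb{R}^n_+:Ax=b\}$. Let $C\subseteq\mathbb{R}^n$ be an open convex set. Fix a basis $B$ of $P$ with nonbasic set $N=\{1,\dots,n\}\setminus B$. Write $P=\{x:x_i=\bar b_i-\sum_{j\in N}\bar a_{ij}x_j\ (i\in B),\ x\ge0\}$ with $\bar b\ge0$. The basic solution $\bar x$ has $\bar x_i=\bar b_i$ ($i\in B$) and $0$ ($i\in N$). $P^B$ is obtained by dropping $x_i\ge0$ for $i\in B$. For $j\in N$, $\bar r^j$ has $\bar r^j_k=-\bar a_{kj}$ ($k\in B$), $\bar r^j_j=1$, and $0$ otherwise. Thus $P^B=\{\bar x+\sum_{j\in N}x_j\bar r^j:x_j\ge0\}$. It is assumed that $\bar x\notin\mathrm{cl}(C)$. For $j\in N$, $\alpha_j=\inf\{\lambda\ge0:\bar x+\lambda\bar r^j\in C\}$ and $\beta_j=\sup\{\lambda\ge0:\bar x+\lambda\bar r^j\in C\}$, with $\alpha_j=+\infty$, $\beta_j=-\infty$ if the halfline misses $C$. Define - $N_1=\{j:\alpha_j\in(0,\infty),\beta_j=+\infty\}$; - $N_2=\{j:\alpha_j\in(0,\infty),\beta_j\in(\alpha_j,\infty)\}$.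 For a set $K$, $\mathrm{recc}(K)=\{d:x+\lambda d\in K\ \forall x\in K,\lambda\ge0\}$. For $D\subseteq N_1\cup N_2$, $G_D^C=\{\bar x\}+\mathrm{conv}\big(\bigcup_{j\in D}\{\lambda\bar r^j:\lambda>\alpha_j\}\big)+\mathrm{recc}(C)$. For $(i,j)\in D\times(N\setminus D)$, $\gamma_{ij}=\sup\{\gamma\ge0:\alpha_i\bar r^i+\gamma\bar r^j\in\mathrm{recc}(G_D^C)\}$ (possibly $+\infty$). Let $M_D=\{i\in D:\gamma_{ij}>0\ \forall j\in N\setminus D\}$. *)

theory Defs
  imports "HOL-Analysis.Analysis"
begin

definition recc :: "('a::real_vector) set \<Rightarrow> 'a set" where
  "recc K = {d. \<forall>x\<in>K. \<forall>t::real. t \<ge> 0 \<longrightarrow> x + t *\<^sub>R d \<in> K}"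

definition is_basis :: "real^'n^'m \<Rightarrow> 'n set \<Rightarrow> bool" where
  "is_basis A B \<longleftrightarrow> card B = CARD('m) \<and> inj_on (\<lambda>k. column k A) B
      \<and> independent ((\<lambda>k. column k A) ` B)"

definition xbar :: "'n set \<Rightarrow> ('n \<Rightarrow> real) \<Rightarrow> real^'n::finite" where
  "xbar B bb = (\<chi> k. if k \<in> B then bb k else 0)"

definition rbar :: "'n set \<Rightarrow> ('n \<Rightarrow> 'n \<Rightarrow> real) \<Rightarrow> 'n \<Rightarrow> real^'n::finite" where
  "rbar B ab j = (\<chi> k. if k \<in> B then - ab k j else if k = j then 1 else 0)"

text \<open>P^B: drop the nonnegativity of the basic variables.\<close>
definition PB :: "'n::finite set \<Rightarrow> ('n \<Rightarrow> real) \<Rightarrow> ('n \<Rightarrow> 'n \<Rightarrow> real) \<Rightarrow> (real^'n) set" where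
  "PB B bb ab = {x. (\<forall>i\<in>B. x$i = bb i - (\<Sum>j\<in>UNIV - B. ab i j * x$j))
                   \<and> (\<forall>j\<in>UNIV - B. x$j \<ge> 0)}"

text \<open>alpha_j (inf, +infinity if empty) and beta_j (sup, -infinity if empty).\<close>
definition alpha :: "(real^'n::finite) set \<Rightarrow> real^'n \<Rightarrow> real^'n \<Rightarrow> ereal" where
  "alpha C x r = Inf (ereal ` {t. t \<ge> 0 \<and> x + t *\<^sub>R r \<in> C})"

definition beta :: "(real^'n::finite) set \<Rightarrow> real^'n \<Rightarrow> real^'n \<Rightarrow> ereal" where
  "beta C x r = Sup (ereal ` {t. t \<ge> 0 \<and> x + t *\<^sub>R r \<in> C})"

definition N1 :: "(real^'n::finite) set \<Rightarrow> 'n set \<Rightarrow> ('n \<Rightarrow> real) \<Rightarrow> ('n \<Rightarrow> 'n \<Rightarrow> real) \<Rightarrow> 'n set" where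
  "N1 C B bb ab = {j \<in> UNIV - B.
     0 < alpha C (xbar B bb) (rbar B ab j) \<and> alpha C (xbar B bb) (rbar B ab j) < \<infinity>
     \<and> beta C (xbar B bb) (rbar B ab j) = \<infinity>}"

definition N2 :: "(real^'n::finite) set \<Rightarrow> 'n set \<Rightarrow> ('n \<Rightarrow> real) \<Rightarrow> ('n \<Rightarrow> 'n \<Rightarrow> real) \<Rightarrow> 'n set" where
  "N2 C B bb ab = {j \<in> UNIV - B.
     0 < alpha C (xbar B bb) (rbar B ab j) \<and> alpha C (xbar B bb) (rbar B ab j) < \<infinity>
     \<and> alpha C (xbar B bb) (rbar B ab j) < beta C (xbar B bb) (rbar B ab j)
     \<and> beta C (xbar B bb) (rbar B ab j) < \<infinity>}"

definition GDC :: "(real^'n::finite) set \<Rightarrow> 'n set \<Rightarrow> ('n \<Rightarrow> real) \<Rightarrow> ('n \<Rightarrow> 'n \<Rightarrow> real) \<Rightarrow> 'n set \<Rightarrow> (real^'n) set" where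
  "GDC C B bb ab D = {xbar B bb + y + z | y z.
      y \<in> convex hull (\<Union>j\<in>D. {t *\<^sub>R rbar B ab j | t.
                 ereal t > alpha C (xbar B bb) (rbar B ab j)})
      \<and> z \<in> recc C}"

definition gamma :: "(real^'n::finite) set \<Rightarrow> 'n set \<Rightarrow> ('n \<Rightarrow> real) \<Rightarrow> ('n \<Rightarrow> 'n \<Rightarrow> real) \<Rightarrow> 'n set \<Rightarrow> 'n \<Rightarrow> 'n \<Rightarrow> ereal" where
  "gamma C B bb ab D i j = Sup (ereal ` {g. g \<ge> 0 \<and>
      real_of_ereal (alpha C (xbar B bb) (rbar B ab i)) *\<^sub>R rbar B ab i + g *\<^sub>R rbar B ab j
        \<in> recc (GDC C B bb ab D)})"

definition MD :: "(real^'n::finite) set \<Rightarrow> 'n set \<Rightarrow> ('n \<Rightarrow> real) \<Rightarrow> ('n \<Rightarrow> 'n \<Rightarrow> real) \<Rightarrow> 'n set \<Rightarrow> 'n set" where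
  "MD C B bb ab D = {i \<in> D. \<forall>j \<in> UNIV - B - D. gamma C B bb ab D i j > 0}"

end

theory Submission
  imports Defs
begin

text \<open>Since \<open>\<alpha>\<^sub>k \<ge> 0\<close>, the set \<open>U\<close> of points \<open>t r\<^sup>k\<close> with \<open>k \<in> D\<close>, \<open>t > \<alpha>\<^sub>k\<close> is closed
  under scaling by factors \<open>\<ge> 1\<close>, and it contains the open ray beyond \<open>\<alpha>\<^sub>i r\<^sup>i\<close>. Writing
  \<open>h + c r\<^sup>i = (1 - e) (h / (1 - e)) + e ((c / e) r\<^sup>i)\<close> with \<open>e\<close> small shows that \<open>r\<^sup>i\<close>,
  hence \<open>\<alpha>\<^sub>i r\<^sup>i\<close>, is a recession direction of \<open>conv U\<close> and thus of \<open>G\<^sub>D\<^sup>C\<close>. Since recession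
  cones are convex cones, the \<open>\<gamma> \<ge> 0\<close> with \<open>\<alpha>\<^sub>i r\<^sup>i + \<gamma> r\<^sup>j \<in> recc(G\<^sub>D\<^sup>C)\<close> form an interval
  containing \<open>0\<close>.\<close>

lemma recc_nonneg_lincomb:
  assumes "d1 \<in> recc K" "d2 \<in> recc K" "p1 \<ge> 0" "p2 \<ge> 0"
  shows "p1 *\<^sub>R d1 + p2 *\<^sub>R d2 \<in> recc K"
  unfolding recc_def
proof (intro CollectI ballI allI impI)
  fix x and t :: real assume x: "x \<in> K" and t: "t \<ge> 0"
  have "x + (t * p1) *\<^sub>R d1 \<in> K" using assms(1,3) x t unfolding recc_def by simp
  hence "(x + (t * p1) *\<^sub>R d1) + (t * p2) *\<^sub>R d2 \<in> K" using assms(2,4) t unfolding recc_def by simp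
  thus "x + t *\<^sub>R (p1 *\<^sub>R d1 + p2 *\<^sub>R d2) \<in> K" by (simp add: algebra_simps)
qed

lemma recc_scaleR:
  assumes "d \<in> recc K" "c \<ge> 0"
  shows "c *\<^sub>R d \<in> recc K"
  using recc_nonneg_lincomb[OF assms(1) assms(1) assms(2) order_refl] by simp

lemma recc_below_Sup:
  assumes a: "a \<in> recc K" and g: "0 \<le> g"
    and g_less: "ereal g < Sup (ereal ` {g. g \<ge> 0 \<and> a + g *\<^sub>R d \<in> recc K})"
  shows "a + g *\<^sub>R d \<in> recc K"
proof -
  obtain g' where g': "a + g' *\<^sub>R d \<in> recc K" "g < g'"
    using g_less by (auto simp: less_Sup_iff)
  have "(1 - g / g') *\<^sub>R a + (g / g') *\<^sub>R (a + g' *\<^sub>R d) \<in> recc K"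
    using g' g by (intro recc_nonneg_lincomb a) auto
  moreover have "(1 - g / g') *\<^sub>R a + (g / g') *\<^sub>R (a + g' *\<^sub>R d) = a + g *\<^sub>R d"
    using g' g by (simp add: algebra_simps)
  ultimately show ?thesis by simp
qed

lemma recc_Minkowski_sum:
  assumes "d \<in> recc S"
  shows "d \<in> recc {x + y + z | y z. y \<in> S \<and> z \<in> T}"
  unfolding recc_def
proof (rule CollectI, intro ballI allI impI)
  fix w and t :: real assume "w \<in> {x + y + z | y z. y \<in> S \<and> z \<in> T}" and t: "t \<ge> 0"
  then obtain y z where w: "w = x + y + z" "y \<in> S" "z \<in> T" by blast
  have "y + t *\<^sub>R d \<in> S" using assms w(2) t unfolding recc_def by blast
  moreover have "w + t *\<^sub>R d = x + (y + t *\<^sub>R d) + z" using w(1) by (simp add: algebra_simps)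
  ultimately show "w + t *\<^sub>R d \<in> {x + y + z | y z. y \<in> S \<and> z \<in> T}" using w(3) by blast
qed

lemma convex_hull_add_ray:
  fixes U :: "'a::real_vector set"
  assumes scale: "\<And>u s. u \<in> U \<Longrightarrow> s \<ge> 1 \<Longrightarrow> s *\<^sub>R u \<in> U"
    and ray: "\<And>t. t > a \<Longrightarrow> t *\<^sub>R r \<in> U"
    and h: "h \<in> convex hull U" and c: "c > 0"
  shows "h + c *\<^sub>R r \<in> convex hull U"
proof -
  define e where "e = c / (c + \<bar>a\<bar> + 1)"
  have e: "0 < e" "e < 1" using c unfolding e_def by auto
  have "a < c + \<bar>a\<bar> + 1" using c by linarith
  also have "\<dots> = c / e" using c unfolding e_def by simp
  finally have "a < c / e" .
  hence "(c / e) *\<^sub>R r \<in> U" by (rule ray)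
  hence far: "(c / e) *\<^sub>R r \<in> convex hull U" by (rule hull_inc)
  have "(1 / (1 - e)) *\<^sub>R h \<in> (*\<^sub>R) (1 / (1 - e)) ` (convex hull U)" using h by (rule imageI)
  also have "\<dots> = convex hull ((*\<^sub>R) (1 / (1 - e)) ` U)" by (simp add: convex_hull_scaling)
  also have "\<dots> \<subseteq> convex hull U" using e by (intro hull_mono) (auto intro!: scale)
  finally have stretched: "(1 / (1 - e)) *\<^sub>R h \<in> convex hull U" .
  have "(1 - e) *\<^sub>R ((1 / (1 - e)) *\<^sub>R h) + e *\<^sub>R ((c / e) *\<^sub>R r) \<in> convex hull U"
    using e by (intro convexD[OF convex_convex_hull stretched far]) auto
  thus ?thesis using e by simp
qed

lemma ray_in_recc_convex_hull:
  fixes U :: "'a::real_vector set"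
  assumes "\<And>u s. u \<in> U \<Longrightarrow> s \<ge> 1 \<Longrightarrow> s *\<^sub>R u \<in> U"
    and "\<And>t. t > a \<Longrightarrow> t *\<^sub>R r \<in> U"
  shows "r \<in> recc (convex hull U)"
  unfolding recc_def
proof (intro CollectI ballI allI impI)
  fix h and t :: real assume h: "h \<in> convex hull U" and "t \<ge> 0"
  then consider "t = 0" | "t > 0" by linarith
  thus "h + t *\<^sub>R r \<in> convex hull U"
    by cases (use h convex_hull_add_ray[OF assms h] in auto)
qed

lemma alpha_nonneg: "alpha C x r \<ge> 0"
  unfolding alpha_def by (auto intro: Inf_greatest)

lemma rays_beyond_alpha_scale:
  assumes "u \<in> (\<Union>k\<in>D. {t *\<^sub>R r k | t. ereal t > alpha C x (r k)})" and "s \<ge> 1"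
  shows "s *\<^sub>R u \<in> (\<Union>k\<in>D. {t *\<^sub>R r k | t. ereal t > alpha C x (r k)})"
proof -
  obtain k t where k: "k \<in> D" "ereal t > alpha C x (r k)" "u = t *\<^sub>R r k"
    using assms(1) by blast
  have "(0::ereal) < ereal t" using alpha_nonneg k(2) by (rule order.strict_trans1)
  hence "t > 0" by simp
  hence "ereal t \<le> ereal (s * t)" using assms(2) by simp
  hence "ereal (s * t) > alpha C x (r k)" using k(2) by order
  thus ?thesis using k(1,3) by auto
qed

theorem proposition2:
  fixes A :: "real^'n::finite^'m::finite" and b :: "real^'m"
    and B :: "'n set" and bb :: "'n \<Rightarrow> real" and ab :: "'n \<Rightarrow> 'n \<Rightarrow> real"
    and C :: "(real^'n) set" and D :: "'n set" and i j :: 'n and g :: real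
  assumes full_rank: "rank A = CARD('m)"
    and basis: "is_basis A B"
    and tableau: "\<And>x. A *v x = b \<longleftrightarrow>
                    (\<forall>k\<in>B. x$k = bb k - (\<Sum>l\<in>UNIV - B. ab k l * x$l))"
    and bb_nonneg: "\<forall>k\<in>B. bb k \<ge> 0"
    and C_open: "open C" and C_convex: "convex C"
    and xbar_notin: "xbar B bb \<notin> closure C"
    and recc_sub: "recc C \<subseteq> recc (PB B bb ab)"
    and D_sub: "D \<subseteq> N1 C B bb ab \<union> N2 C B bb ab"
    and i_in: "i \<in> MD C B bb ab D"
    and j_in: "j \<in> UNIV - B - D"
    and g_nonneg: "0 \<le> g"
    and g_less: "ereal g < gamma C B bb ab D i j"
  shows "real_of_ereal (alpha C (xbar B bb) (rbar B ab i)) *\<^sub>R rbar B ab i + g *\<^sub>R rbar B ab j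
           \<in> recc (GDC C B bb ab D)"
proof -
  let ?\<alpha> = "\<lambda>k. alpha C (xbar B bb) (rbar B ab k)"
  define U where "U = (\<Union>k\<in>D. {t *\<^sub>R rbar B ab k | t. ereal t > ?\<alpha> k})"
  have iD: "i \<in> D" using i_in unfolding MD_def by auto
  hence "0 < ?\<alpha> i" "?\<alpha> i < \<infinity>" using D_sub unfolding N1_def N2_def by auto
  then obtain a where a: "?\<alpha> i = ereal a" "a \<ge> 0" by (cases "?\<alpha> i") auto
  have "rbar B ab i \<in> recc (convex hull U)"
  proof (rule ray_in_recc_convex_hull)
    show "s *\<^sub>R u \<in> U" if "u \<in> U" "s \<ge> 1" for u s
      using that unfolding U_def by (rule rays_beyond_alpha_scale)
    show "t *\<^sub>R rbar B ab i \<in> U" if "t > a" for t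
    proof -
      have "ereal t > ?\<alpha> i" using that a(1) by simp
      thus ?thesis using iD unfolding U_def by blast
    qed
  qed
  hence "a *\<^sub>R rbar B ab i \<in> recc (GDC C B bb ab D)"
    unfolding GDC_def U_def using a(2) by (intro recc_Minkowski_sum recc_scaleR)
  thus ?thesis
    using g_nonneg g_less a(1) unfolding gamma_def by (simp add: recc_below_Sup)
qed

end
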